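(* Let $n\ge1$ and let $J\in\mathbb{R}^{2n\times 2n}$ be partitioned as $J=\begin{bmatrix}A & B\\ C & D\end{bmatrix}$ with $A,B,C,D\in\mathbb{R}^{n\times n}$. Assume (Assumption 1) that $J$ is nonsingular and $A$ is positive definite (i.e., $x^TAx>0$ for all $x\ne0$). Write $J^{-1}=\begin{bmatrix} S^\theta_p & S^\theta_q\\ S^v_p & S^v_q\end{bmatrix}$ with $n\times n$ blocks and $\tilde S=[S^v_p\ \ S^v_q]\in\mathbb{R}^{n\times 2n}$. Let $\alpha\in(0,1)^n$ and $K=\operatorname{diag}(k_1,\dots,k_n)$ with $k_i=\pm\frac{1}{\alpha_i}\sqrt{1-\alpha_i^2}$ (fixed signs), let $k_{\max}=\max_i k_i$, $k_{\min}=\min_i k_i$, $\Delta k=k_{\max}-k_{\min}$, and let $M=k_{\max}A-C$, assumed invertible. Suppose (Assumption 2) $$\Delta k < \|M^{-1}\|_2^{-1}\,\|A\|_2^{-1}$$ (which implies $\|M^{-1}\|_2\,\Delta k\,\|A\|_2<1$). Then $S_\dagger := S^v_p + S^v_q K$ is invertible; consequently, for every $\Delta v\in\mathbb{R}^n$ there exists a unique $\Delta p\in\mathbb{R}^n$ such that, with $\Delta q = K\Delta p$ and $\Delta x=[\Delta p^T,\Delta q^T]^T\in\mathbb{R}^{2n}$, one has $\Delta v=\tilde S\,\Delta x$ (i.e., $\Delta x$ is the unique solution of $\Delta v=\tilde S\Delta x$ within the subspace $\{[\Delta p^T,(K\Delta p)^T]^T:\Delta p\in\mathbb{R}^n\}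$).
   Context: $J$ is the Newton–Raphson power flow Jacobian relating $[\Delta p;\Delta q]=J[\Delta\theta;\Delta v]$, with blocks $A=\partial p/\partial\theta$, $B=\partial p/\partial v$, $C=\partial q/\partial\theta$, $D=\partial q/\partial v$; $\Delta p,\Delta q,\Delta\theta,\Delta v\in\mathbb{R}^n$ are perturbations of active power, reactive power, voltage angle and voltage magnitude at the $n$ PQ buses. $\alpha_i$ are the bus power factors $p_i/\sqrt{p_i^2+q_i^2}$. $\|\cdot\|_2$ is the spectral norm (largest singular value). *)

theory Defs
  imports "HOL-Analysis.Analysis"
begin

definition spec_norm :: "real^'n^'m \<Rightarrow> real" where
  "spec_norm M = onorm (\<lambda>x. M *v x)"

definition pos_def :: "real^'n^'n \<Rightarrow> bool" where
  "pos_def A \<longleftrightarrow> (\<forall>x. x \<noteq> 0 \<longrightarrow> x \<bullet> (A *v x) > 0)"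

definition block_mat :: "real^'n^'n \<Rightarrow> real^'n^'n \<Rightarrow> real^'n^'n \<Rightarrow> real^'n^'n
    \<Rightarrow> real^('n+'n)^('n+'n)" where
  "block_mat A B C D = (\<chi> r c. case r of
      Inl i \<Rightarrow> (case c of Inl j \<Rightarrow> A$i$j | Inr j \<Rightarrow> B$i$j)
    | Inr i \<Rightarrow> (case c of Inl j \<Rightarrow> C$i$j | Inr j \<Rightarrow> D$i$j))"

definition blk11 :: "real^('n+'n)^('n+'n) \<Rightarrow> real^'n^'n" where
  "blk11 X = (\<chi> i j. X $ Inl i $ Inl j)"
definition blk12 :: "real^('n+'n)^('n+'n) \<Rightarrow> real^'n^'n" where
  "blk12 X = (\<chi> i j. X $ Inl i $ Inr j)"
definition blk21 :: "real^('n+'n)^('n+'n) \<Rightarrow> real^'n^'n" where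
  "blk21 X = (\<chi> i j. X $ Inr i $ Inl j)"
definition blk22 :: "real^('n+'n)^('n+'n) \<Rightarrow> real^'n^'n" where
  "blk22 X = (\<chi> i j. X $ Inr i $ Inr j)"

definition lower_rows :: "real^('n+'n)^('n+'n) \<Rightarrow> real^('n+'n)^'n" where
  "lower_rows X = (\<chi> i. X $ Inr i)"

definition diag_mat :: "real^'n \<Rightarrow> real^'n^'n" where
  "diag_mat k = (\<chi> i j. if i = j then k$i else 0)"

definition stack :: "real^'n \<Rightarrow> real^'n \<Rightarrow> real^('n+'n)" where
  "stack p q = (\<chi> r. case r of Inl i \<Rightarrow> p$i | Inr i \<Rightarrow> q$i)"

definition kvec :: "('n \<Rightarrow> real) \<Rightarrow> real^'n \<Rightarrow> real^'n" where
  "kvec \<sigma> \<alpha> = (\<chi> i. \<sigma> i * sqrt (1 - (\<alpha>$i)\<^sup>2) / \<alpha>$i)"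

end

theory Submission
  imports Defs
begin

(* If S p = 0 for S = S^v_p + S^v_q K, then [p; K p] lies in the kernel of the lower block row
   of J^-1, which is the range of the first block column [A; C] of J: p = A t and K A t = C t.
   Hence S is invertible as soon as K A - C is. Now K A - C = M - diag(kmax - k_i) A perturbs M
   by a matrix of spectral norm at most (kmax - kmin) |A|, which Assumption 2 makes smaller
   than 1 / |M^-1|, and such a perturbation of an invertible matrix stays invertible. *)

lemma matrix_inv_right:
  fixes X :: "real^'n::finite^'n"
  assumes "invertible X"
  shows "X ** matrix_inv X = mat 1"
  using someI_ex[OF assms[unfolded invertible_def]] unfolding matrix_inv_def by blast

lemma matrix_inv_left:
  fixes X :: "real^'n::finite^'n"
  assumes "invertible X"
  shows "matrix_inv X ** X = mat 1"
  using someI_ex[OF assms[unfolded invertible_def]] unfolding matrix_inv_def by blast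

lemma invertible_imp_ex1_solution:
  fixes S :: "real^'n::finite^'n"
  assumes "invertible S"
  shows "\<exists>!x. y = S *v x"
proof -
  have "y = S *v (matrix_inv S *v y)"
    by (simp add: matrix_vector_mul_assoc matrix_inv_right[OF assms])
  then show ?thesis
    using inj_matrix_vector_mult[OF assms] by (metis injD)
qed

lemma spec_norm_nonneg: "0 \<le> spec_norm M"
  unfolding spec_norm_def by (rule onorm_pos_le) simp

lemma norm_matrix_vector_le_spec_norm: "norm (M *v x) \<le> spec_norm M * norm x"
  unfolding spec_norm_def by (rule onorm) simp

lemma spec_norm_le:
  fixes M :: "real^'n::finite^'m::finite"
  assumes "\<And>x. norm (M *v x) \<le> b * norm x"
  shows "spec_norm M \<le> b"
  unfolding spec_norm_def by (rule onorm_le) (rule assms)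

lemma diag_mat_mult_component: "(diag_mat d *v x) $ i = d $ i * x $ i"
  unfolding diag_mat_def matrix_vector_mult_def
  by (simp add: if_distrib[of "\<lambda>t. t * _"] cong: if_cong)

lemma diag_mat_matrix_mult_component: "(diag_mat d ** A) $ i $ j = d $ i * A $ i $ j"
  unfolding diag_mat_def matrix_matrix_mult_def
  by (simp add: if_distrib[of "\<lambda>t. t * _"] cong: if_cong)

lemma norm_diag_mat_mult_le:
  assumes "\<And>i. \<bar>d $ i\<bar> \<le> c"
  shows "norm (diag_mat d *v x) \<le> c * norm x"
proof -
  have c: "0 \<le> c" using abs_ge_zero order_trans assms by blast
  have "norm (diag_mat d *v x) \<le> norm (c *\<^sub>R x)"
  proof (rule norm_le_componentwise_cart)
    fix i
    show "norm ((diag_mat d *v x) $ i) \<le> norm ((c *\<^sub>R x) $ i)"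
      using assms[of i] c by (simp add: diag_mat_mult_component abs_mult mult_right_mono)
  qed
  then show ?thesis using c by simp
qed

lemma spec_norm_diag_mat_mult_le:
  fixes A :: "real^'n::finite^'n"
  assumes "\<And>i. \<bar>d $ i\<bar> \<le> c"
  shows "spec_norm (diag_mat d ** A) \<le> c * spec_norm A"
proof (rule spec_norm_le)
  fix x
  have c: "0 \<le> c" using abs_ge_zero order_trans assms by blast
  have "norm ((diag_mat d ** A) *v x) \<le> c * norm (A *v x)"
    using norm_diag_mat_mult_le[OF assms] by (simp flip: matrix_vector_mul_assoc)
  also have "\<dots> \<le> c * spec_norm A * norm x"
    using mult_left_mono[OF norm_matrix_vector_le_spec_norm c] by (simp add: mult.assoc)
  finally show "norm ((diag_mat d ** A) *v x) \<le> c * spec_norm A * norm x" .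
qed

lemma invertible_diff_small:
  fixes M E :: "real^'n::finite^'n"
  assumes "invertible M" and small: "spec_norm (matrix_inv M) * spec_norm E < 1"
  shows "invertible (M - E)"
  unfolding invertible_left_inverse matrix_left_invertible_ker
proof (intro allI impI)
  fix x
  assume "(M - E) *v x = 0"
  then have "M *v x = E *v x"
    by (simp add: matrix_vector_mult_diff_rdistrib)
  then have "x = matrix_inv M *v (E *v x)"
    by (metis matrix_vector_mul_assoc matrix_inv_left[OF assms(1)] matrix_vector_mul_lid)
  then have "norm x \<le> spec_norm (matrix_inv M) * norm (E *v x)"
    by (metis norm_matrix_vector_le_spec_norm)
  also have "\<dots> \<le> spec_norm (matrix_inv M) * (spec_norm E * norm x)"
    by (rule mult_left_mono[OF norm_matrix_vector_le_spec_norm spec_norm_nonneg])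
  finally have "(1 - spec_norm (matrix_inv M) * spec_norm E) * norm x \<le> 0"
    by (simp add: algebra_simps)
  with small show "x = 0"
    by (simp add: mult_le_0_iff)
qed

lemma sum_UNIV_Plus:
  fixes g :: "'a::finite + 'b::finite \<Rightarrow> 'c::comm_monoid_add"
  shows "sum g UNIV = (\<Sum>i\<in>UNIV. g (Inl i)) + (\<Sum>j\<in>UNIV. g (Inr j))"
  using sum.Plus[of "UNIV::'a set" "UNIV::'b set" g] by (simp add: comp_def)

lemma stack_eq_iff: "stack a b = stack c d \<longleftrightarrow> a = c \<and> b = d"
proof
  assume eq: "stack a b = stack c d"
  have "a $ i = c $ i" "b $ i = d $ i" for i
    using arg_cong[OF eq, of "\<lambda>v. v $ Inl i"] arg_cong[OF eq, of "\<lambda>v. v $ Inr i"]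
    by (simp_all add: stack_def)
  then show "a = c \<and> b = d"
    by (simp add: vec_eq_iff)
qed simp

lemma stack_halves: "stack (\<chi> i. y $ Inl i) (\<chi> i. y $ Inr i) = y"
  unfolding vec_eq_iff stack_def by (auto split: sum.split)

lemma block_mat_mult_stack:
  "block_mat A B C D *v stack p q = stack (A *v p + B *v q) (C *v p + D *v q)"
  unfolding vec_eq_iff
  by (auto simp: matrix_vector_mult_def block_mat_def stack_def sum_UNIV_Plus split: sum.split)

lemma lower_rows_mult_stack:
  "lower_rows X *v stack p q = blk21 X *v p + blk22 X *v q"
  by (simp add: vec_eq_iff matrix_vector_mult_def lower_rows_def stack_def blk21_def blk22_def
      sum_UNIV_Plus)

lemma lower_rows_mult: "lower_rows X *v s = (\<chi> i. (X *v s) $ Inr i)"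
  by (simp add: vec_eq_iff matrix_vector_mult_def lower_rows_def)

lemma kernel_lower_rows_inverse_in_first_column:
  assumes "invertible (block_mat A B C D)"
    and "lower_rows (matrix_inv (block_mat A B C D)) *v stack p q = 0"
  obtains \<theta> where "p = A *v \<theta>" and "q = C *v \<theta>"
proof -
  define y where "y = matrix_inv (block_mat A B C D) *v stack p q"
  define \<theta> where "\<theta> = (\<chi> i. y $ Inl i)"
  have "(\<chi> i. y $ Inr i) = 0"
    using assms(2) unfolding y_def lower_rows_mult .
  then have "y = stack \<theta> 0"
    using stack_halves[of y] unfolding \<theta>_def by simp
  moreover have "block_mat A B C D *v y = stack p q"
    unfolding y_def by (simp add: matrix_vector_mul_assoc matrix_inv_right[OF assms(1)])
  ultimately have "stack (A *v \<theta>) (C *v \<theta>) = stack p q"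
    by (simp add: block_mat_mult_stack)
  then have "p = A *v \<theta>" and "q = C *v \<theta>"
    by (simp_all add: stack_eq_iff)
  then show ?thesis
    by (rule that)
qed

theorem theorem1:
  fixes A B C D :: "real^'n^'n" and \<alpha> :: "real^'n" and \<sigma> :: "'n \<Rightarrow> real"
  defines "J \<equiv> block_mat A B C D"
    and "kmax \<equiv> Max (range (\<lambda>i. kvec \<sigma> \<alpha> $ i))"
    and "kmin \<equiv> Min (range (\<lambda>i. kvec \<sigma> \<alpha> $ i))"
    and "K \<equiv> diag_mat (kvec \<sigma> \<alpha>)"
  assumes J_inv: "invertible J"
    and A_pd: "pos_def A"
    and alpha: "\<forall>i. 0 < \<alpha>$i \<and> \<alpha>$i < 1"
    and signs: "\<forall>i. \<sigma> i = 1 \<or> \<sigma> i = -1"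
    and M_inv: "invertible (kmax *\<^sub>R A - C)"
    and asm2: "kmax - kmin < inverse (spec_norm (matrix_inv (kmax *\<^sub>R A - C))) * inverse (spec_norm A)"
  shows "invertible (blk21 (matrix_inv J) + blk22 (matrix_inv J) ** K)
       \<and> (\<forall>\<Delta>v. \<exists>!\<Delta>p. \<Delta>v = lower_rows (matrix_inv J) *v stack \<Delta>p (K *v \<Delta>p))"
proof -
  define M where "M = kmax *\<^sub>R A - C"
  define S where "S = blk21 (matrix_inv J) + blk22 (matrix_inv J) ** K"
  define E where "E = diag_mat (\<chi> i. kmax - kvec \<sigma> \<alpha> $ i) ** A"
  have "\<bar>kmax - kvec \<sigma> \<alpha> $ i\<bar> \<le> kmax - kmin" for i
    using Max_ge[of _ "kvec \<sigma> \<alpha> $ i"] Min_le[of _ "kvec \<sigma> \<alpha> $ i"]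
    unfolding kmax_def kmin_def by fastforce
  then have "spec_norm E \<le> (kmax - kmin) * spec_norm A"
    unfolding E_def by (intro spec_norm_diag_mat_mult_le) simp
  moreover have "spec_norm (matrix_inv M) * ((kmax - kmin) * spec_norm A) < 1"
  proof (cases "spec_norm (matrix_inv M) = 0 \<or> spec_norm A = 0")
    case False
    then show ?thesis
      using asm2 spec_norm_nonneg[of A] spec_norm_nonneg[of "matrix_inv M"] unfolding M_def
      by (simp add: field_simps)
  qed auto
  ultimately have "spec_norm (matrix_inv M) * spec_norm E < 1"
    using mult_left_mono[OF _ spec_norm_nonneg[of "matrix_inv M"]] by (meson le_less_trans)
  then have "invertible (M - E)"
    using M_inv invertible_diff_small unfolding M_def by blast
  moreover have "M - E = K ** A - C"
    unfolding M_def E_def K_def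
    by (simp add: vec_eq_iff diag_mat_matrix_mult_component algebra_simps)
  ultimately have KAC: "invertible (K ** A - C)" by simp
  have S_mult: "S *v p = lower_rows (matrix_inv J) *v stack p (K *v p)" for p
    unfolding S_def lower_rows_mult_stack
    by (simp add: matrix_vector_mult_add_rdistrib matrix_vector_mul_assoc)
  have "p = 0" if "S *v p = 0" for p
  proof -
    have "lower_rows (matrix_inv J) *v stack p (K *v p) = 0"
      using that by (simp flip: S_mult)
    then obtain \<theta> where p: "p = A *v \<theta>" and Kp: "K *v p = C *v \<theta>"
      using kernel_lower_rows_inverse_in_first_column J_inv unfolding J_def by blast
    have "(K ** A - C) *v \<theta> = 0"
      using p Kp by (simp add: matrix_vector_mult_diff_rdistrib matrix_vector_mul_assoc)
    then have "\<theta> = 0"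
      using KAC unfolding invertible_left_inverse matrix_left_invertible_ker by blast
    then show "p = 0"
      using p by simp
  qed
  then have "invertible S"
    unfolding invertible_left_inverse matrix_left_invertible_ker by blast
  moreover have "\<exists>!\<Delta>p. \<Delta>v = lower_rows (matrix_inv J) *v stack \<Delta>p (K *v \<Delta>p)" for \<Delta>v
    using invertible_imp_ex1_solution[OF \<open>invertible S\<close>, of \<Delta>v] by (simp flip: S_mult)
  ultimately show ?thesis
    unfolding S_def by blast
qed

end
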